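(* For every single-qubit density operator $\rho$ and every single-qubit Clifford unitary $U$ (a $2\times 2$ unitary normalizing the single-qubit Pauli group), $C(U\rho U^\dagger)=C(\rho)$, where $C$ is computed with $n=1$.
   Context: Let $I,X,Y,Z$ be the Pauli matrices. For $(q,p)\in\mathbb{F}_2^2$ define the single-qubit phase-point operator $A_{(q,p)}=\tfrac12\bigl(I+(-1)^pX+(-1)^{q+p}Y+(-1)^qZ\bigr)$. For $n$ qubits and $\alpha=(\alpha_1,\dots,\alpha_n)\in(\mathbb{F}_2^2)^n$ set $A_\alpha=A_{\alpha_1}\otimes\cdots\otimes A_{\alpha_n}$. The discrete Wigner function of an $n$-qubit operator $\rho$ is $W_\rho(\alpha)=2^{-n}\mathrm{Tr}(\rho A_\alpha)$, regarded as a vector in $\mathbb{R}^{4^n}$. $\mathrm{Stab}_n$ denotes the set of pure $n$-qubit stabilizer states, i.e. density operators $|\psi\rangle\langle\psi|$ with $|\psi\rangle$ the unique common $+1$ eigenvector of an abelian subgroup of the $n$-qubit Pauli group of size $2^n$ (not containing $-I$). The free Wigner polytope is $\mathcal{W}_{\mathrm{free}}=\mathrm{conv}\{W_\sigma:\sigma\in\mathrm{Stab}_n\}$, and the Wigner distance is $C(\rho)=\min_{f\in\mathcal{W}_{\mathrm{free}}}\|W_\rho-f\|_1$. *)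

theory Defs
  imports "HOL-Analysis.Analysis"
begin

type_synonym qmat = "complex ^ 2 ^ 2"

definition adj :: "qmat \<Rightarrow> qmat" where
  "adj A = (\<chi> i j. cnj (A $ j $ i))"

definition mtrace :: "qmat \<Rightarrow> complex" where
  "mtrace A = (\<Sum>i\<in>UNIV. A $ i $ i)"

definition mk2 :: "complex \<Rightarrow> complex \<Rightarrow> complex \<Rightarrow> complex \<Rightarrow> qmat" where
  "mk2 a b c d = (\<chi> i j. if i = 1 then (if j = 1 then a else b) else (if j = 1 then c else d))"

definition pI :: qmat where "pI = mk2 1 0 0 1"
definition pX :: qmat where "pX = mk2 0 1 1 0"
definition pY :: qmat where "pY = mk2 0 (-\<i>) \<i> 0"
definition pZ :: qmat where "pZ = mk2 1 0 0 (-1)"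

definition pauli_group :: "qmat set" where
  "pauli_group = {(\<chi> i j. (\<i> ^ k) * P $ i $ j) | (k::nat) P. P \<in> {pI, pX, pY, pZ}}"

definition unitary :: "qmat \<Rightarrow> bool" where
  "unitary U \<longleftrightarrow> U ** adj U = mat 1 \<and> adj U ** U = mat 1"

definition clifford :: "qmat \<Rightarrow> bool" where
  "clifford U \<longleftrightarrow> unitary U \<and> (\<lambda>P. U ** P ** adj U) ` pauli_group = pauli_group"

definition density_op :: "qmat \<Rightarrow> bool" where
  "density_op \<rho> \<longleftrightarrow> adj \<rho> = \<rho> \<and>
     (\<forall>v::complex^2. Im ((\<Sum>i\<in>UNIV. cnj (v $ i) * (\<rho> *v v) $ i)) = 0 \<and>
                     Re ((\<Sum>i\<in>UNIV. cnj (v $ i) * (\<rho> *v v) $ i)) \<ge> 0) \<and>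
     mtrace \<rho> = 1"

definition outer :: "complex^2 \<Rightarrow> qmat" where
  "outer v = (\<chi> i j. v $ i * cnj (v $ j))"

definition stab1 :: "qmat set" where
  "stab1 = {outer \<psi> | \<psi> S.
      S \<subseteq> pauli_group \<and> mat 1 \<in> S \<and> (\<forall>g\<in>S. \<forall>h\<in>S. g ** h \<in> S) \<and>
      (\<forall>g\<in>S. \<forall>h\<in>S. g ** h = h ** g) \<and> card S = 2 \<and> - mat 1 \<notin> S \<and>
      (\<Sum>i\<in>UNIV. cmod (\<psi> $ i) ^ 2) = 1 \<and>
      {v. \<forall>g\<in>S. g *v v = v} = {c *s \<psi> | c. True}}"

definition sgnb :: "bool \<Rightarrow> complex" where "sgnb b = (if b then -1 else 1)"

definition phase_pt :: "bool \<times> bool \<Rightarrow> qmat" where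
  "phase_pt qp = (case qp of (q, p) \<Rightarrow>
     (\<chi> i j. (pI $ i $ j + sgnb p * pX $ i $ j + sgnb (q \<noteq> p) * pY $ i $ j + sgnb q * pZ $ i $ j) / 2))"

definition wigner :: "qmat \<Rightarrow> real ^ (bool \<times> bool)" where
  "wigner \<rho> = (\<chi> \<alpha>. Re (mtrace (\<rho> ** phase_pt \<alpha>)) / 2)"

definition norm1 :: "real ^ (bool \<times> bool) \<Rightarrow> real" where
  "norm1 f = (\<Sum>\<alpha>\<in>UNIV. \<bar>f $ \<alpha>\<bar>)"

definition W_free :: "(real ^ (bool \<times> bool)) set" where
  "W_free = convex hull (wigner ` stab1)"

definition wigner_dist :: "qmat \<Rightarrow> real" where
  "wigner_dist \<rho> = Inf ((\<lambda>f. norm1 (wigner \<rho> - f)) ` W_free)"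

end

(* Conjugation by a Clifford unitary U maps stabilizer states to stabilizer states, hence the
   convex hull of Stab_1 onto itself, and it permutes the six signed Paulis +-X, +-Y, +-Z, which
   are exactly the Hermitian traceless elements of the Pauli group. For a traceless D = rho - sigma
   the Wigner function is W_D(q,p) = ((-1)^p x + (-1)^(q+p) y + (-1)^q z) / 4 with
   x = Re tr(D X), y = Re tr(D Y), z = Re tr(D Z), so that
   ||W_D||_1 = max(2 max(|x|,|y|,|z|), |x|+|y|+|z|) / 2. This is a symmetric function of the
   values Re tr(D Q) over the signed Paulis Q, hence unchanged when D is conjugated by U. So
   sigma |-> U sigma U^dagger is a bijection of the free set preserving ||W_rho - W_sigma||_1,
   and the infimum defining C does not change. *)

theory Submission
  imports Defs
begin

lemma qmat_eq_iff:
  "(A::qmat) = B \<longleftrightarrow> A$1$1 = B$1$1 \<and> A$1$2 = B$1$2 \<and> A$2$1 = B$2$1 \<and> A$2$2 = B$2$2"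
  by (auto simp: vec_eq_iff forall_2)

lemma vec2_eq_iff: "(v::complex^2) = w \<longleftrightarrow> v$1 = w$1 \<and> v$2 = w$2"
  by (auto simp: vec_eq_iff forall_2)

lemma mk2_nth [simp]:
  "mk2 a b c d $ 1 $ 1 = a" "mk2 a b c d $ 1 $ 2 = b" "mk2 a b c d $ 2 $ 1 = c" "mk2 a b c d $ 2 $ 2 = d"
  by (simp_all add: mk2_def)

lemmas qmat_entry_simps = qmat_eq_iff vec2_eq_iff adj_def mtrace_def outer_def mat_def
  matrix_matrix_mult_def matrix_vector_mult_def sum_2

lemma adj_adj [simp]: "adj (adj A) = A"
  by (simp add: qmat_entry_simps)

lemma adj_mult: "adj (A ** B) = adj B ** adj A"
  by (simp add: qmat_entry_simps mult.commute)

lemma mtrace_mult_commute: "mtrace (A ** B) = mtrace (B ** A)"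
  by (simp add: qmat_entry_simps mult.commute)

lemma mtrace_add: "mtrace (A + B) = mtrace A + mtrace B"
  by (simp add: qmat_entry_simps)

lemma mtrace_diff: "mtrace (A - B) = mtrace A - mtrace B"
  by (simp add: qmat_entry_simps)

lemma mtrace_scaleR: "mtrace (r *\<^sub>R A) = r *\<^sub>R mtrace A"
  by (simp add: qmat_entry_simps algebra_simps)

lemma qmat_mult_add_right: "((A::qmat) + B) ** (C::qmat) = A ** C + B ** C"
  by (simp add: qmat_entry_simps algebra_simps)

lemma qmat_mult_scaleR_left: "(r *\<^sub>R (A::qmat)) ** (B::qmat) = r *\<^sub>R (A ** B)"
  by (simp add: qmat_entry_simps algebra_simps)

lemma qmat_mult_scaleR_right: "(A::qmat) ** (r *\<^sub>R (B::qmat)) = r *\<^sub>R (A ** B)"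
  by (simp add: qmat_entry_simps algebra_simps)

lemma qmat_mult_smult_vec: "(A::qmat) *v (c *s v) = c *s (A *v v)"
  by (simp add: qmat_entry_simps algebra_simps)

lemma sum_cmod_sq_eq_inner: "complex_of_real (\<Sum>i\<in>UNIV. cmod (v $ i) ^ 2) = (\<Sum>i\<in>UNIV. cnj (v $ i) * v $ i)"
  unfolding of_real_sum complex_norm_square by (simp add: mult.commute)

lemma mtrace_outer: "mtrace (outer \<psi>) = complex_of_real (\<Sum>i\<in>UNIV. cmod (\<psi> $ i) ^ 2)"
  unfolding sum_cmod_sq_eq_inner by (simp add: mtrace_def outer_def mult.commute)

lemma cinner_mult_vec_adj: "(\<Sum>i\<in>UNIV. cnj ((A *v v) $ i) * w $ i) = (\<Sum>i\<in>UNIV. cnj (v $ i) * (adj A *v w) $ i)"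
  by (simp add: qmat_entry_simps algebra_simps)

lemma unitary_adj: "unitary U \<Longrightarrow> unitary (adj U)"
  by (simp add: unitary_def)

lemma unitary_mult_vec_eq_iff: "unitary U \<Longrightarrow> U *v x = y \<longleftrightarrow> x = adj U *v y"
  unfolding unitary_def by (metis matrix_vector_mul_assoc matrix_vector_mul_lid)

lemma unitary_sum_cmod_sq:
  assumes "unitary U"
  shows "(\<Sum>i\<in>UNIV. cmod ((U *v v) $ i) ^ 2) = (\<Sum>i\<in>UNIV. cmod (v $ i) ^ 2)"
proof -
  have "complex_of_real (\<Sum>i\<in>UNIV. cmod ((U *v v) $ i) ^ 2)
      = (\<Sum>i\<in>UNIV. cnj (v $ i) * (adj U *v (U *v v)) $ i)"
    by (simp only: sum_cmod_sq_eq_inner cinner_mult_vec_adj)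
  also have "\<dots> = (\<Sum>i\<in>UNIV. cnj (v $ i) * v $ i)"
    using assms by (simp add: matrix_vector_mul_assoc unitary_def)
  also have "\<dots> = complex_of_real (\<Sum>i\<in>UNIV. cmod (v $ i) ^ 2)"
    by (simp only: sum_cmod_sq_eq_inner)
  finally show ?thesis
    by (simp only: of_real_eq_iff)
qed

definition conj_by :: "qmat \<Rightarrow> qmat \<Rightarrow> qmat" where
  "conj_by U A = U ** A ** adj U"

lemma conj_by_mult: "unitary U \<Longrightarrow> conj_by U (A ** B) = conj_by U A ** conj_by U B"
  unfolding conj_by_def unitary_def by (simp add: matrix_mul_assoc) (metis matrix_mul_assoc matrix_mul_rid)

lemma conj_by_adj_conj_by [simp]: "unitary U \<Longrightarrow> conj_by (adj U) (conj_by U A) = A"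
  unfolding conj_by_def unitary_def by (simp add: matrix_mul_assoc) (simp add: matrix_mul_assoc[symmetric])

lemma conj_by_conj_by_adj [simp]: "unitary U \<Longrightarrow> conj_by U (conj_by (adj U) A) = A"
  using conj_by_adj_conj_by[OF unitary_adj] by simp

lemma conj_by_mat1 [simp]: "unitary U \<Longrightarrow> conj_by U (mat 1) = mat 1"
  unfolding conj_by_def unitary_def by simp

lemma conj_by_uminus: "conj_by U (- A) = - conj_by U A"
  by (simp add: conj_by_def qmat_entry_simps algebra_simps)

lemma adj_conj_by: "adj (conj_by U A) = conj_by U (adj A)"
  by (simp add: conj_by_def adj_mult matrix_mul_assoc)

lemma mtrace_conj_by: "unitary U \<Longrightarrow> mtrace (conj_by U A) = mtrace A"
  unfolding conj_by_def unitary_def by (metis mtrace_mult_commute matrix_mul_assoc matrix_mul_lid)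

lemma inj_conj_by: "unitary U \<Longrightarrow> inj (conj_by U)"
  by (metis conj_by_adj_conj_by injI)

lemma linear_conj_by: "linear (conj_by U)"
  by (rule linearI)
    (simp_all add: conj_by_def matrix_add_ldistrib qmat_mult_add_right
      qmat_mult_scaleR_left qmat_mult_scaleR_right)

lemma conj_by_outer: "conj_by U (outer \<psi>) = outer (U *v \<psi>)"
  by (simp add: conj_by_def qmat_entry_simps algebra_simps)

lemma conj_by_mult_vec: "conj_by U g *v v = U *v (g *v (adj U *v v))"
  by (simp add: conj_by_def matrix_vector_mul_assoc matrix_mul_assoc)

lemma clifford_unitary: "clifford U \<Longrightarrow> unitary U"
  by (simp add: clifford_def)

lemma clifford_conj_by_pauli_group: "clifford U \<Longrightarrow> conj_by U ` pauli_group = pauli_group"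
  by (simp add: clifford_def conj_by_def)

lemma clifford_adj:
  assumes "clifford U"
  shows "clifford (adj U)"
proof -
  have "conj_by (adj U) ` pauli_group = conj_by (adj U) ` conj_by U ` pauli_group"
    using clifford_conj_by_pauli_group[OF assms] by simp
  also have "\<dots> = pauli_group"
    using clifford_unitary[OF assms] by (simp add: image_image)
  finally show ?thesis
    using clifford_unitary[OF assms] by (simp add: clifford_def unitary_adj conj_by_def)
qed

lemma clifford_conj_by_image_eq:
  assumes closed: "\<And>V X. clifford V \<Longrightarrow> X \<in> M \<Longrightarrow> conj_by V X \<in> M" and "clifford U"
  shows "conj_by U ` M = M"
proof
  show "conj_by U ` M \<subseteq> M"
    using closed[OF \<open>clifford U\<close>] by blast
  show "M \<subseteq> conj_by U ` M"
  proof
    fix X assume "X \<in> M"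
    then have "conj_by (adj U) X \<in> M"
      using closed[OF clifford_adj[OF \<open>clifford U\<close>]] by blast
    moreover have "X = conj_by U (conj_by (adj U) X)"
      using clifford_unitary[OF \<open>clifford U\<close>] by simp
    ultimately show "X \<in> conj_by U ` M" by blast
  qed
qed

lemma fixed_vectors_conj_by:
  assumes "unitary U"
  shows "{v. \<forall>g\<in>conj_by U ` S. g *v v = v} = (\<lambda>w. U *v w) ` {w. \<forall>g\<in>S. g *v w = w}"
proof -
  have fixed: "(\<forall>g\<in>conj_by U ` S. g *v v = v) \<longleftrightarrow> (\<forall>g\<in>S. g *v (adj U *v v) = adj U *v v)" for v
    by (simp add: conj_by_mult_vec unitary_mult_vec_eq_iff[OF assms])
  have in_image: "v \<in> (\<lambda>w. U *v w) ` W \<longleftrightarrow> adj U *v v \<in> W" for v W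
    by (auto simp: image_iff eq_commute[of v] unitary_mult_vec_eq_iff[OF assms])
  show ?thesis
    unfolding set_eq_iff by (simp only: mem_Collect_eq fixed in_image simp_thms)
qed

lemma image_scalar_multiples: "(\<lambda>w. (A::qmat) *v w) ` {c *s \<psi> | c. True} = {c *s (A *v \<psi>) | c. True}"
  by (force simp: qmat_mult_smult_vec)

lemma stab1_conj_by:
  assumes "clifford U" and "X \<in> stab1"
  shows "conj_by U X \<in> stab1"
proof -
  from assms(2) obtain \<psi> S where X: "X = outer \<psi>" and S: "S \<subseteq> pauli_group" "mat 1 \<in> S"
    "\<forall>g\<in>S. \<forall>h\<in>S. g ** h \<in> S" "\<forall>g\<in>S. \<forall>h\<in>S. g ** h = h ** g" "card S = 2" "- mat 1 \<notin> S"
    "(\<Sum>i\<in>UNIV. cmod (\<psi> $ i) ^ 2) = 1" "{v. \<forall>g\<in>S. g *v v = v} = {c *s \<psi> | c. True}"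
    unfolding stab1_def by blast
  have U: "unitary U"
    using clifford_unitary[OF assms(1)] .
  have "- mat 1 \<notin> conj_by U ` S"
  proof
    assume "- mat 1 \<in> conj_by U ` S"
    then obtain g where "g \<in> S" "conj_by U g = - mat 1" by auto
    then have "g = - mat 1"
      using conj_by_adj_conj_by[OF U, of g] by (simp add: conj_by_uminus unitary_adj[OF U])
    with \<open>g \<in> S\<close> S(6) show False by simp
  qed
  moreover have "conj_by U ` S \<subseteq> pauli_group"
    using S(1) clifford_conj_by_pauli_group[OF assms(1)] by blast
  moreover have "mat 1 \<in> conj_by U ` S"
    using S(2) conj_by_mat1[OF U] by (metis image_eqI)
  moreover have "\<forall>g\<in>conj_by U ` S. \<forall>h\<in>conj_by U ` S. g ** h \<in> conj_by U ` S"
    using S(3) by (auto simp: conj_by_mult[OF U, symmetric])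
  moreover have "\<forall>g\<in>conj_by U ` S. \<forall>h\<in>conj_by U ` S. g ** h = h ** g"
    using S(4) by (auto simp: conj_by_mult[OF U, symmetric])
  moreover have "card (conj_by U ` S) = 2"
    using S(5) inj_conj_by[OF U] by (simp add: card_image inj_on_subset)
  moreover have "(\<Sum>i\<in>UNIV. cmod ((U *v \<psi>) $ i) ^ 2) = 1"
    using S(7) unitary_sum_cmod_sq[OF U] by simp
  moreover have "{v. \<forall>g\<in>conj_by U ` S. g *v v = v} = {c *s (U *v \<psi>) | c. True}"
    unfolding fixed_vectors_conj_by[OF U] S(8) by (rule image_scalar_multiples)
  ultimately show ?thesis
    unfolding stab1_def X conj_by_outer by blast
qed

lemma clifford_conj_by_stab1: "clifford U \<Longrightarrow> conj_by U ` stab1 = stab1"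
  by (rule clifford_conj_by_image_eq[OF stab1_conj_by])

lemma mtrace_stab1: "X \<in> stab1 \<Longrightarrow> mtrace X = 1"
  unfolding stab1_def by (auto simp: mtrace_outer)

lemma mtrace_convex_hull_stab1:
  assumes "\<sigma> \<in> convex hull stab1"
  shows "mtrace \<sigma> = 1"
proof -
  have "convex {X::qmat. mtrace X = 1}"
    by (rule convexI) (simp add: mtrace_add mtrace_scaleR flip: scaleR_add_left)
  then have "convex hull stab1 \<subseteq> {X. mtrace X = 1}"
    by (rule hull_minimal[rotated]) (auto simp: mtrace_stab1)
  then show ?thesis
    using assms by auto
qed

lemma clifford_conj_by_convex_hull_stab1: "clifford U \<Longrightarrow> conj_by U ` (convex hull stab1) = convex hull stab1"
  by (simp add: convex_hull_linear_image[OF linear_conj_by] clifford_conj_by_stab1)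

definition signed_paulis :: "qmat set" where
  "signed_paulis = {pX, - pX, pY, - pY, pZ, - pZ}"

lemma i_power_cases: "(\<i>::complex) ^ k \<in> {1, \<i>, -1, - \<i>}"
proof -
  have "(\<i>::complex) ^ k = \<i> ^ (k mod 4) * (\<i> ^ 4) ^ (k div 4)"
    by (metis mod_mult_div_eq power_add power_mult)
  then have "(\<i>::complex) ^ k = \<i> ^ (k mod 4)"
    by simp
  moreover have "k mod 4 \<in> {0, 1, 2, 3}" by auto
  ultimately show ?thesis
    by (auto simp: power2_eq_square power3_eq_cube)
qed

lemma phase_mk2: "(\<chi> i j. z * mk2 a b c d $ i $ j) = mk2 (z * a) (z * b) (z * c) (z * d)"
  by (simp add: qmat_eq_iff)

lemma pauli_group_signed:
  assumes "P \<in> {pI, pX, pY, pZ}"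
  shows "P \<in> pauli_group" and "- P \<in> pauli_group"
proof -
  have phase: "(\<chi> i j. \<i> ^ k * P $ i $ j) \<in> pauli_group" for k
    using assms unfolding pauli_group_def by blast
  have "P = (\<chi> i j. \<i> ^ 0 * P $ i $ j)" and "- P = (\<chi> i j. \<i> ^ 2 * P $ i $ j)"
    by (simp_all add: qmat_eq_iff)
  with phase show "P \<in> pauli_group" "- P \<in> pauli_group"
    by metis+
qed

lemma signed_paulis_iff: "Q \<in> signed_paulis \<longleftrightarrow> Q \<in> pauli_group \<and> adj Q = Q \<and> mtrace Q = 0"
proof
  assume "Q \<in> signed_paulis"
  moreover have "signed_paulis \<subseteq> pauli_group"
    unfolding signed_paulis_def using pauli_group_signed by blast
  moreover have "\<forall>Q\<in>signed_paulis. adj Q = Q \<and> mtrace Q = 0"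
    unfolding signed_paulis_def by (simp add: qmat_entry_simps pX_def pY_def pZ_def)
  ultimately show "Q \<in> pauli_group \<and> adj Q = Q \<and> mtrace Q = 0"
    by blast
next
  assume Q: "Q \<in> pauli_group \<and> adj Q = Q \<and> mtrace Q = 0"
  then obtain k P where "Q = (\<chi> i j. \<i> ^ k * P $ i $ j)" and "P \<in> {pI, pX, pY, pZ}"
    unfolding pauli_group_def by blast
  with i_power_cases[of k] Q show "Q \<in> signed_paulis"
    unfolding signed_paulis_def
    by (elim insertE emptyE)
      (simp_all add: qmat_entry_simps pI_def pX_def pY_def pZ_def phase_mk2 complex_eq_iff)
qed

lemma signed_paulis_conj_by:
  assumes "clifford U" and "Q \<in> signed_paulis"
  shows "conj_by U Q \<in> signed_paulis"
  using assms clifford_conj_by_pauli_group[OF assms(1)]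
  by (auto simp: signed_paulis_iff adj_conj_by mtrace_conj_by clifford_unitary)

lemma clifford_conj_by_signed_paulis: "clifford U \<Longrightarrow> conj_by U ` signed_paulis = signed_paulis"
  by (rule clifford_conj_by_image_eq[OF signed_paulis_conj_by])

definition pauli_coeff :: "qmat \<Rightarrow> qmat \<Rightarrow> real" where
  "pauli_coeff Q D = Re (mtrace (D ** Q))"

lemma pauli_coeff_uminus: "pauli_coeff (- Q) D = - pauli_coeff Q D"
  by (simp add: pauli_coeff_def qmat_entry_simps algebra_simps)

lemma pauli_coeff_conj_by: "pauli_coeff Q (conj_by U D) = pauli_coeff (conj_by (adj U) Q) D"
proof -
  have "mtrace (U ** D ** adj U ** Q) = mtrace (U ** (D ** adj U ** Q))"
    by (simp add: matrix_mul_assoc)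
  also have "\<dots> = mtrace (D ** adj U ** Q ** U)"
    by (rule mtrace_mult_commute)
  also have "\<dots> = mtrace (D ** (adj U ** Q ** U))"
    by (simp add: matrix_mul_assoc)
  finally show ?thesis
    by (simp add: pauli_coeff_def conj_by_def)
qed

lemma wigner_nth:
  "wigner D $ (False, False) = (Re (mtrace D) + pauli_coeff pX D + pauli_coeff pY D + pauli_coeff pZ D) / 4"
  "wigner D $ (False, True) = (Re (mtrace D) - pauli_coeff pX D - pauli_coeff pY D + pauli_coeff pZ D) / 4"
  "wigner D $ (True, False) = (Re (mtrace D) + pauli_coeff pX D - pauli_coeff pY D - pauli_coeff pZ D) / 4"
  "wigner D $ (True, True) = (Re (mtrace D) - pauli_coeff pX D + pauli_coeff pY D - pauli_coeff pZ D) / 4"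
  by (simp_all add: wigner_def phase_pt_def sgnb_def pauli_coeff_def qmat_entry_simps
      pI_def pX_def pY_def pZ_def field_simps)

lemma norm1_wigner_traceless:
  assumes "Re (mtrace D) = 0"
  shows "norm1 (wigner D) =
    (\<bar>pauli_coeff pX D + pauli_coeff pY D + pauli_coeff pZ D\<bar>
      + \<bar>- pauli_coeff pX D - pauli_coeff pY D + pauli_coeff pZ D\<bar>
      + \<bar>pauli_coeff pX D - pauli_coeff pY D - pauli_coeff pZ D\<bar>
      + \<bar>- pauli_coeff pX D + pauli_coeff pY D - pauli_coeff pZ D\<bar>) / 4"
proof -
  have phase_space: "(UNIV :: (bool \<times> bool) set) = {(False, False), (False, True), (True, False), (True, True)}"
    by auto
  show ?thesis
    unfolding norm1_def phase_space using assms by (simp add: wigner_nth)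
qed

lemma sum_abs_even_sign_patterns:
  fixes a b c :: real
  shows "(\<bar>a + b + c\<bar> + \<bar>- a - b + c\<bar> + \<bar>a - b - c\<bar> + \<bar>- a + b - c\<bar>) / 4
    = max (2 * max \<bar>a\<bar> (max \<bar>b\<bar> \<bar>c\<bar>)) (\<bar>a\<bar> + \<bar>b\<bar> + \<bar>c\<bar>) / 2"
  unfolding max_def abs_if by (simp split: if_splits; linarith)

definition pauli_norm :: "qmat \<Rightarrow> real" where
  "pauli_norm D = max (2 * Max ((\<lambda>Q. pauli_coeff Q D) ` signed_paulis))
                      ((\<Sum>Q\<in>signed_paulis. \<bar>pauli_coeff Q D\<bar>) / 2) / 2"

lemma pauli_norm_conj_by:
  assumes "clifford U"
  shows "pauli_norm (conj_by U D) = pauli_norm D"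
proof -
  have perm: "conj_by (adj U) ` signed_paulis = signed_paulis"
    by (rule clifford_conj_by_signed_paulis[OF clifford_adj[OF assms]])
  have inj: "inj_on (conj_by (adj U)) signed_paulis"
    using inj_conj_by[OF unitary_adj[OF clifford_unitary[OF assms]]] by (rule inj_on_subset) simp
  have "(\<lambda>Q. pauli_coeff Q (conj_by U D)) ` signed_paulis
      = (\<lambda>Q. pauli_coeff Q D) ` conj_by (adj U) ` signed_paulis"
    by (simp add: pauli_coeff_conj_by image_image)
  moreover have "(\<Sum>Q\<in>signed_paulis. \<bar>pauli_coeff Q (conj_by U D)\<bar>)
      = (\<Sum>Q\<in>conj_by (adj U) ` signed_paulis. \<bar>pauli_coeff Q D\<bar>)"
    by (simp add: pauli_coeff_conj_by sum.reindex[OF inj])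
  ultimately show ?thesis
    by (simp add: pauli_norm_def perm)
qed

lemma pauli_norm_eq:
  "pauli_norm D = max (2 * max \<bar>pauli_coeff pX D\<bar> (max \<bar>pauli_coeff pY D\<bar> \<bar>pauli_coeff pZ D\<bar>))
     (\<bar>pauli_coeff pX D\<bar> + \<bar>pauli_coeff pY D\<bar> + \<bar>pauli_coeff pZ D\<bar>) / 2"
proof -
  have distinct: "distinct [pX, - pX, pY, - pY, pZ, - pZ]"
    by (simp add: qmat_entry_simps pX_def pY_def pZ_def complex_eq_iff)
  have "(\<Sum>Q\<in>signed_paulis. \<bar>pauli_coeff Q D\<bar>) / 2
      = \<bar>pauli_coeff pX D\<bar> + \<bar>pauli_coeff pY D\<bar> + \<bar>pauli_coeff pZ D\<bar>"
    unfolding signed_paulis_def set_simps[symmetric] sum.distinct_set_conv_list[OF distinct]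
    by (simp add: pauli_coeff_uminus)
  moreover have "Max ((\<lambda>Q. pauli_coeff Q D) ` signed_paulis)
      = max \<bar>pauli_coeff pX D\<bar> (max \<bar>pauli_coeff pY D\<bar> \<bar>pauli_coeff pZ D\<bar>)"
    by (simp add: signed_paulis_def pauli_coeff_uminus) arith
  ultimately show ?thesis
    unfolding pauli_norm_def by (simp only:)
qed

lemma norm1_wigner_eq_pauli_norm:
  assumes "Re (mtrace D) = 0"
  shows "norm1 (wigner D) = pauli_norm D"
  unfolding norm1_wigner_traceless[OF assms] pauli_norm_eq by (rule sum_abs_even_sign_patterns)

lemma norm1_wigner_conj_by:
  assumes "clifford U" and "Re (mtrace D) = 0"
  shows "norm1 (wigner (conj_by U D)) = norm1 (wigner D)"
proof -
  have "Re (mtrace (conj_by U D)) = 0"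
    using assms by (simp add: mtrace_conj_by clifford_unitary)
  then show ?thesis
    using assms by (simp add: norm1_wigner_eq_pauli_norm pauli_norm_conj_by)
qed

lemma linear_wigner: "linear wigner"
  by (rule linearI)
    (simp_all add: wigner_def vec_eq_iff qmat_mult_add_right mtrace_add qmat_mult_scaleR_left mtrace_scaleR)

lemma wigner_dist_eq_Inf_convex_hull_stab1:
  "wigner_dist X = Inf ((\<lambda>\<sigma>. norm1 (wigner (X - \<sigma>))) ` (convex hull stab1))"
  by (simp add: wigner_dist_def W_free_def convex_hull_linear_image[OF linear_wigner, symmetric]
      image_image linear_diff[OF linear_wigner])

theorem theorem3p1:
  fixes \<rho> U :: qmat
  assumes "density_op \<rho>" and "clifford U"
  shows "wigner_dist (U ** \<rho> ** adj U) = wigner_dist \<rho>"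
proof -
  let ?dist = "\<lambda>X \<sigma>. norm1 (wigner (X - \<sigma>))"
  have "mtrace \<rho> = 1" \<comment> \<open>the only property of a density operator that is needed\<close>
    using assms(1) by (simp add: density_op_def)
  then have invariant: "?dist (conj_by U \<rho>) (conj_by U \<sigma>) = ?dist \<rho> \<sigma>"
    if "\<sigma> \<in> convex hull stab1" for \<sigma>
    using that assms(2) norm1_wigner_conj_by[of U "\<rho> - \<sigma>"]
    by (simp add: mtrace_diff mtrace_convex_hull_stab1 linear_diff[OF linear_conj_by])
  have "wigner_dist (conj_by U \<rho>) = Inf (?dist (conj_by U \<rho>) ` conj_by U ` (convex hull stab1))"
    by (simp only: wigner_dist_eq_Inf_convex_hull_stab1 clifford_conj_by_convex_hull_stab1[OF assms(2)])
  also have "\<dots> = Inf (?dist \<rho> ` (convex hull stab1))"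
    unfolding image_image using invariant by (simp cong: image_cong)
  finally show ?thesis
    by (simp add: conj_by_def wigner_dist_eq_Inf_convex_hull_stab1)
qed

end
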